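(* Assume $\int\log dist(f,\mathcal{M})\,d\Lambda(f)>-\infty$ and let $f_0\in A$, $f_n=F^n(f_0)$. Let $u_f$ ($f\in\mathcal{H}_d$) be functions as in the statement: there exist $C,p>0$ with $\frac{f^*\omega}{d}=\omega+dd^cu_f$, $u_f\le0$, $\|u_f\|_{C^1}\le C\,dist(f,\mathcal{M})^{-p}$ for all $f\in\mathcal{H}_d$. Put $u_j=u_{f_j}$ and $$g_n=\sum_{i=0}^{+\infty}\frac{u_{n+i}\circ f_{n+i-1}\circ\cdots\circ f_n}{d^i}$$ (the $i=0$ term being $u_n$), so that $g_n$ is continuous and $T(f_n)=\omega+dd^cg_n$. Then for every $\epsilon>0$ there exists $n_0$ such that $\|g_n\|_\infty\le e^{\epsilon n}$ for all $n\ge n_0$.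
   Context: $\mathbb{P}^k=\mathbb{P}^k(\mathbb{C})$ carries the Fubini–Study form $\omega$ (normalized $\int\omega^k=1$); $dd^c=\frac{i}{\pi}\partial\bar\partial$. Fix $d\ge2$. Rational maps of degree $d$ of $\mathbb{P}^k$ form $\mathbb{P}^N$ with $N=(k+1)\frac{(d+k)!}{d!k!}-1$; $\mathcal{H}_d\subset\mathbb{P}^N$ is the Zariski open set of holomorphic endomorphisms of degree $d$, $\mathcal{M}=\mathbb{P}^N\setminus\mathcal{H}_d$, $dist$ the Fubini–Study distance on $\mathbb{P}^N$. $F:\mathbb{P}^N\to\mathbb{P}^N$ is measurable, $\Lambda$ an $F$-invariant ergodic probability measure. $A$ is the set of $f_0\in\mathbb{P}^N$ with $\frac1n\sum_{i=0}^{n-1}\log dist(F^i(f_0),\mathcal{M})\to\int\log dist(f,\mathcal{M})\,d\Lambda(f)$. For $h_0\in A$, $T(h_0)$ is the weak limit of $\frac{(h_n\circ\cdots\circ h_0)^*\omega}{d^{n+1}}$ where $h_j=F^j(h_0)$. *)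

theory Defs
  imports "HOL-Probability.Probability"
begin

typedef 'i proj = "{L :: ('i \<Rightarrow> complex) set. \<exists>v. v \<noteq> (\<lambda>_. 0) \<and> L = range (\<lambda>c::complex. \<lambda>i. c * v i)}"
  by (rule exI[of _ "range (\<lambda>c::complex. \<lambda>i::'i. c * 1)"], rule CollectI,
      rule exI[of _ "\<lambda>_. 1"], auto simp: fun_eq_iff)

definition pt :: "('i \<Rightarrow> complex) \<Rightarrow> 'i proj" where
  "pt v = Abs_proj (range (\<lambda>c. \<lambda>i. c * v i))"

definition rep :: "'i proj \<Rightarrow> ('i \<Rightarrow> complex)" where
  "rep p = (SOME v. v \<noteq> (\<lambda>_. 0) \<and> Rep_proj p = range (\<lambda>c. \<lambda>i. c * v i))"

definition cinner :: "'i set \<Rightarrow> ('i \<Rightarrow> complex) \<Rightarrow> ('i \<Rightarrow> complex) \<Rightarrow> complex" where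
  "cinner I v w = (\<Sum>i\<in>I. v i * cnj (w i))"

definition cnorm :: "'i set \<Rightarrow> ('i \<Rightarrow> complex) \<Rightarrow> real" where
  "cnorm I v = sqrt (\<Sum>i\<in>I. (cmod (v i))\<^sup>2)"

definition fs_dist :: "'i set \<Rightarrow> 'i proj \<Rightarrow> 'i proj \<Rightarrow> real" where
  "fs_dist I p q = arccos (cmod (cinner I (rep p) (rep q)) / (cnorm I (rep p) * cnorm I (rep q)))"

text \<open>P^k is 'n proj with CARD('n) = k+1.  A rational map of degree d is the class of
  a nonzero coefficient vector indexed by (component j, multi-index alpha of degree d).\<close>

definition multi_idx :: "nat \<Rightarrow> ('n::finite \<Rightarrow> nat) set" where
  "multi_idx d = {\<alpha>. sum \<alpha> UNIV = d}"

definition coef_idx :: "nat \<Rightarrow> ('n::finite \<times> ('n \<Rightarrow> nat)) set" where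
  "coef_idx d = (UNIV :: 'n set) \<times> multi_idx d"

definition ratmaps :: "nat \<Rightarrow> ('n::finite \<times> ('n \<Rightarrow> nat)) proj set" where
  "ratmaps d = {f. \<forall>x. x \<notin> coef_idx d \<longrightarrow> rep f x = 0}"

definition hpoly :: "nat \<Rightarrow> ('n::finite \<times> ('n \<Rightarrow> nat) \<Rightarrow> complex) \<Rightarrow> ('n \<Rightarrow> complex) \<Rightarrow> ('n \<Rightarrow> complex)" where
  "hpoly d c z = (\<lambda>j. \<Sum>\<alpha>\<in>multi_idx d. c (j, \<alpha>) * (\<Prod>i\<in>UNIV. z i ^ \<alpha> i))"

definition degen :: "nat \<Rightarrow> ('n::finite \<times> ('n \<Rightarrow> nat)) proj set" where
  "degen d = {f \<in> ratmaps d. \<exists>z. z \<noteq> (\<lambda>_. 0) \<and> hpoly d (rep f) z = (\<lambda>_. 0)}"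

definition holo :: "nat \<Rightarrow> ('n::finite \<times> ('n \<Rightarrow> nat)) proj set" where
  "holo d = ratmaps d - degen d"

definition distM :: "nat \<Rightarrow> ('n::finite \<times> ('n \<Rightarrow> nat)) proj \<Rightarrow> real" where
  "distM d f = Inf (fs_dist (coef_idx d) f ` degen d)"

definition act :: "nat \<Rightarrow> ('n::finite \<times> ('n \<Rightarrow> nat)) proj \<Rightarrow> 'n proj \<Rightarrow> 'n proj" where
  "act d f x = pt (hpoly d (rep f) (rep x))"

definition fs_opens :: "'i set \<Rightarrow> 'i proj set \<Rightarrow> 'i proj set set" where
  "fs_opens I S0 = {S. S \<subseteq> S0 \<and> (\<forall>p\<in>S. \<exists>e>0. \<forall>q\<in>S0. fs_dist I p q < e \<longrightarrow> q \<in> S)}"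

definition ratmaps_borel :: "nat \<Rightarrow> ('n::finite \<times> ('n \<Rightarrow> nat)) proj measure" where
  "ratmaps_borel d = sigma (ratmaps d) (fs_opens (coef_idx d) (ratmaps d))"

definition log_dist :: "nat \<Rightarrow> ('n::finite \<times> ('n \<Rightarrow> nat)) proj \<Rightarrow> ereal" where
  "log_dist d f = (if distM d f > 0 then ereal (ln (distM d f)) else -\<infinity>)"

definition ext_integral :: "'a measure \<Rightarrow> ('a \<Rightarrow> ereal) \<Rightarrow> ereal" where
  "ext_integral M g = enn2ereal (\<integral>\<^sup>+x. e2ennreal (max 0 (g x)) \<partial>M)
                    - enn2ereal (\<integral>\<^sup>+x. e2ennreal (max 0 (- g x)) \<partial>M)"

definition birkhoff_set :: "nat \<Rightarrow> (('n::finite \<times> ('n \<Rightarrow> nat)) proj \<Rightarrow> ('n \<times> ('n \<Rightarrow> nat)) proj)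
    \<Rightarrow> ('n \<times> ('n \<Rightarrow> nat)) proj measure \<Rightarrow> ('n \<times> ('n \<Rightarrow> nat)) proj set" where
  "birkhoff_set d F \<Lambda> = {f0 \<in> ratmaps d.
      (\<lambda>n. (\<Sum>i<n. log_dist d ((F ^^ i) f0)) / ereal (real n)) \<longlonglongrightarrow> ext_integral \<Lambda> (log_dist d)}"

definition lift :: "('n::finite proj \<Rightarrow> real) \<Rightarrow> complex^'n \<Rightarrow> real" where
  "lift u z = u (pt (vec_nth z))"

text \<open>C^1 norm of u bounded by K: sup |u| + sup of the norm of the differential
  (computed on the unit sphere, where the Hopf projection is a Riemannian submersion).\<close>
definition C1_norm_le :: "('n::finite proj \<Rightarrow> real) \<Rightarrow> real \<Rightarrow> bool" where
  "C1_norm_le u K \<longleftrightarrow>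
     (\<forall>z. z \<noteq> 0 \<longrightarrow> lift u differentiable (at z)) \<and>
     bdd_above (range (\<lambda>x. \<bar>u x\<bar>)) \<and>
     bdd_above ((\<lambda>z. onorm (frechet_derivative (lift u) (at z))) ` sphere 0 1) \<and>
     (SUP x. \<bar>u x\<bar>) + (SUP z\<in>sphere 0 1. onorm (frechet_derivative (lift u) (at z))) \<le> K"

text \<open>Pluriharmonic (dd^c h = 0) continuous functions: mean value property on all
  complex discs.\<close>
definition pluriharmonic_on :: "(complex^'n::finite) set \<Rightarrow> (complex^'n \<Rightarrow> real) \<Rightarrow> bool" where
  "pluriharmonic_on U h \<longleftrightarrow> continuous_on U h \<and>
     (\<forall>a b r. r > 0 \<and> (\<forall>l. cmod l \<le> r \<longrightarrow> a + l *s b \<in> U) \<longrightarrow>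
        h a = integral {0..2*pi} (\<lambda>t. h (a + (complex_of_real r * cis t) *s b)) / (2*pi))"

text \<open>f^*omega / d = omega + dd^c u, lifted to C^{k+1} minus 0, where omega = dd^c log|z|.\<close>
definition ddc_eq :: "nat \<Rightarrow> ('n::finite \<times> ('n \<Rightarrow> nat)) proj \<Rightarrow> ('n proj \<Rightarrow> real) \<Rightarrow> bool" where
  "ddc_eq d f u \<longleftrightarrow> pluriharmonic_on (- {0})
     (\<lambda>z. ln (cnorm UNIV (hpoly d (rep f) (vec_nth z))) / real d - ln (norm z) - lift u z)"

fun orbit :: "nat \<Rightarrow> (('n::finite \<times> ('n \<Rightarrow> nat)) proj \<Rightarrow> ('n \<times> ('n \<Rightarrow> nat)) proj)
    \<Rightarrow> ('n \<times> ('n \<Rightarrow> nat)) proj \<Rightarrow> nat \<Rightarrow> nat \<Rightarrow> 'n proj \<Rightarrow> 'n proj" where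
  "orbit d F f0 n 0 x = x"
| "orbit d F f0 n (Suc i) x = act d ((F ^^ (n + i)) f0) (orbit d F f0 n i x)"

definition gterm :: "nat \<Rightarrow> (('n::finite \<times> ('n \<Rightarrow> nat)) proj \<Rightarrow> ('n \<times> ('n \<Rightarrow> nat)) proj)
    \<Rightarrow> (('n \<times> ('n \<Rightarrow> nat)) proj \<Rightarrow> 'n proj \<Rightarrow> real) \<Rightarrow> ('n \<times> ('n \<Rightarrow> nat)) proj
    \<Rightarrow> nat \<Rightarrow> 'n proj \<Rightarrow> nat \<Rightarrow> real" where
  "gterm d F u f0 n x i = u ((F ^^ (n + i)) f0) (orbit d F f0 n i x) / real d ^ i"

definition gfun :: "nat \<Rightarrow> (('n::finite \<times> ('n \<Rightarrow> nat)) proj \<Rightarrow> ('n \<times> ('n \<Rightarrow> nat)) proj)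
    \<Rightarrow> (('n \<times> ('n \<Rightarrow> nat)) proj \<Rightarrow> 'n proj \<Rightarrow> real) \<Rightarrow> ('n \<times> ('n \<Rightarrow> nat)) proj
    \<Rightarrow> nat \<Rightarrow> 'n proj \<Rightarrow> real" where
  "gfun d F u f0 n x = (\<Sum>i. gterm d F u f0 n x i)"

end

theory Submission
  imports Defs
begin

text \<open>
  Write f_j = F^j(f0).  Since f0 is Birkhoff-generic and the integral of
  log dist(f, M) is finite, the Birkhoff averages of the (bounded above) sequence
  log dist(f_j, M) converge to a finite limit; hence log dist(f_j, M) = o(j), i.e. for
  every delta > 0 we have dist(f_j, M) >= e^(-K - delta j).  In particular every f_j is a
  holomorphic endomorphism, and the C^1 bound on the potentials gives
  |u_j| <= C dist(f_j, M)^(-p) <= D e^(t j) for any prescribed t > 0.  For e^t < d the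
  series defining g_n is then dominated by a geometric series with ratio e^t / d, so it
  converges and |g_n| <= A e^(t n); choosing t < epsilon gives |g_n| <= e^(epsilon n)
  for large n.
\<close>

text \<open>The Fubini--Study distance takes values in [0, pi] (Cauchy--Schwarz makes the
  argument of arccos lie in [0, 1]).\<close>
lemma fs_dist_bounds: "0 \<le> fs_dist I p q \<and> fs_dist I p q \<le> pi"
proof -
  define v where "v = rep p"
  define w where "w = rep q"
  define x where "x = cmod (cinner I v w) / (cnorm I v * cnorm I w)"
  have norms_nonneg: "cnorm I v \<ge> 0" "cnorm I w \<ge> 0"
    unfolding cnorm_def by (auto intro: sum_nonneg)
  have "cmod (cinner I v w) \<le> (\<Sum>i\<in>I. cmod (v i * cnj (w i)))"
    unfolding cinner_def by (rule norm_sum)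
  also have "\<dots> = (\<Sum>i\<in>I. \<bar>cmod (v i)\<bar> * \<bar>cmod (w i)\<bar>)" by (simp add: norm_mult)
  also have "\<dots> \<le> L2_set (\<lambda>i. cmod (v i)) I * L2_set (\<lambda>i. cmod (w i)) I"
    by (rule L2_set_mult_ineq)
  also have "\<dots> = cnorm I v * cnorm I w" unfolding L2_set_def cnorm_def by simp
  finally have cauchy_schwarz: "cmod (cinner I v w) \<le> cnorm I v * cnorm I w" .
  have "0 \<le> x" unfolding x_def using norms_nonneg by simp
  moreover have "x \<le> 1"
  proof (cases "cnorm I v * cnorm I w = 0")
    case True
    then show ?thesis unfolding x_def True by simp
  next
    case False
    then have "cnorm I v * cnorm I w > 0" using norms_nonneg by (simp add: less_le)
    then show ?thesis unfolding x_def using cauchy_schwarz by simp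
  qed
  moreover have "fs_dist I p q = arccos x" unfolding fs_dist_def x_def v_def w_def by simp
  ultimately show ?thesis using arccos_bounded[of x] by simp
qed

lemma rep_nonzero: "rep p \<noteq> (\<lambda>_. 0)"
proof -
  have "\<exists>v. v \<noteq> (\<lambda>_. 0) \<and> Rep_proj p = range (\<lambda>c. \<lambda>i. c * v i)"
    using Rep_proj[of p] by simp
  then show ?thesis unfolding rep_def by (rule someI2_ex) auto
qed

lemma finite_multi_idx: "finite (multi_idx d :: ('n::finite \<Rightarrow> nat) set)"
proof (rule finite_subset)
  show "multi_idx d \<subseteq> (PiE UNIV (\<lambda>_. {..d}) :: ('n \<Rightarrow> nat) set)"
  proof
    fix \<alpha> :: "'n \<Rightarrow> nat"
    assume "\<alpha> \<in> multi_idx d"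
    then have "\<alpha> i \<le> d" for i
      using member_le_sum[of i UNIV \<alpha>] unfolding multi_idx_def by auto
    then show "\<alpha> \<in> PiE UNIV (\<lambda>_. {..d})" by (simp add: PiE_iff)
  qed
qed (rule finite_PiE, auto)

lemma finite_coef_idx: "finite (coef_idx d :: ('n::finite \<times> ('n \<Rightarrow> nat)) set)"
  unfolding coef_idx_def by (rule finite_cartesian_product[OF finite finite_multi_idx])

text \<open>Every rational map is at distance 0 from itself: its coefficient vector is nonzero
  and supported in the finite index set, so the quotient under arccos is exactly 1.\<close>
lemma fs_dist_self:
  assumes "f \<in> ratmaps d"
  shows "fs_dist (coef_idx d) f f = 0"
proof -
  define v where "v = rep f"
  define I where "I = (coef_idx d :: ('a::finite \<times> ('a \<Rightarrow> nat)) set)"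
  define S where "S = (\<Sum>i\<in>I. (cmod (v i))\<^sup>2)"
  obtain x where x: "v x \<noteq> 0" using rep_nonzero[of f] unfolding v_def by (auto simp: fun_eq_iff)
  have "x \<in> I" using assms x unfolding ratmaps_def v_def I_def by (cases x) auto
  have "finite I" unfolding I_def by (rule finite_coef_idx)
  then have "S > 0" unfolding S_def by (rule sum_pos2[OF _ \<open>x \<in> I\<close>]) (use x in auto)
  have "cinner I v v = (\<Sum>i\<in>I. complex_of_real ((cmod (v i))\<^sup>2))"
    unfolding cinner_def
    by (rule sum.cong) (simp_all add: complex_norm_square[symmetric] del: of_real_power)
  also have "\<dots> = complex_of_real S" unfolding S_def by simp
  finally have "cmod (cinner I v v) = S" using \<open>S > 0\<close> by simp
  moreover have "cnorm I v * cnorm I v = S" unfolding cnorm_def S_def by (simp add: sum_nonneg)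
  ultimately show ?thesis unfolding fs_dist_def v_def[symmetric] I_def[symmetric]
    using \<open>S > 0\<close> by simp
qed

lemma distM_le_fs_dist: "g \<in> degen d \<Longrightarrow> distM d f \<le> fs_dist (coef_idx d) f g"
  unfolding distM_def
  by (rule cInf_lower) (use fs_dist_bounds in \<open>auto intro!: bdd_belowI[of _ 0]\<close>)

text \<open>dist(f, M) is bounded above uniformly in f (by pi, or by the conventional value of
  an empty infimum when M is empty).\<close>
lemma distM_bounded_above: "\<exists>B. \<forall>f. distM d (f :: ('n::finite \<times> ('n \<Rightarrow> nat)) proj) \<le> B"
proof (cases "degen d = ({} :: ('n \<times> ('n \<Rightarrow> nat)) proj set)")
  case True
  then show ?thesis unfolding distM_def by auto
next
  case False
  then obtain g :: "('n \<times> ('n \<Rightarrow> nat)) proj" where "g \<in> degen d" by blast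
  then have "distM d f \<le> pi" for f :: "('n \<times> ('n \<Rightarrow> nat)) proj"
    using distM_le_fs_dist[of g d f] fs_dist_bounds[of "coef_idx d" f g] by linarith
  then show ?thesis by blast
qed

lemma log_dist_bounded_above:
  "\<exists>B. \<forall>f. log_dist d (f :: ('n::finite \<times> ('n \<Rightarrow> nat)) proj) \<le> ereal B"
proof -
  obtain B where B: "\<And>f :: ('n \<times> ('n \<Rightarrow> nat)) proj. distM d f \<le> B"
    using distM_bounded_above by blast
  have "log_dist d f \<le> ereal B" for f :: "('n \<times> ('n \<Rightarrow> nat)) proj"
  proof (cases "distM d f > 0")
    case True
    then have "ln (distM d f) \<le> B" using ln_bound[OF True] B[of f] by linarith
    then show ?thesis using True unfolding log_dist_def by simp
  qed (simp add: log_dist_def)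
  then show ?thesis by blast
qed

lemma distM_degen: "f \<in> degen d \<Longrightarrow> distM d f \<le> 0"
  using distM_le_fs_dist[of f d f] fs_dist_self[of f d] unfolding degen_def by simp

lemma holo_if_distM_pos: "f \<in> ratmaps d \<Longrightarrow> distM d f > 0 \<Longrightarrow> f \<in> holo d"
  using distM_degen[of f d] unfolding holo_def by force

lemma convergent_averages_no_minf:
  fixes a :: "nat \<Rightarrow> ereal"
  assumes ub: "\<And>i. a i \<le> ereal B"
    and lim: "(\<lambda>n. (\<Sum>i<n. a i) / ereal (real n)) \<longlonglongrightarrow> L" and "L > -\<infinity>"
  shows "a j \<noteq> -\<infinity>"
proof
  assume aj: "a j = -\<infinity>"
  have "(\<Sum>i<n. a i) / ereal (real n) = -\<infinity>" if n: "Suc j \<le> n" for n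
  proof -
    have "(\<Sum>i<n. a i) \<le> (\<Sum>i<n. ereal B)" by (rule sum_mono) (use ub in auto)
    also have "\<dots> < \<infinity>" by simp
    finally have "(\<Sum>i<n. a i) < \<infinity>" .
    moreover have "\<bar>\<Sum>i<n. a i\<bar> = \<infinity>" unfolding sum_Inf using n aj
      by (intro conjI bexI[of _ j]) auto
    ultimately show ?thesis using n by auto
  qed
  then have "(\<lambda>n. (\<Sum>i<n. a i) / ereal (real n)) \<longlonglongrightarrow> -\<infinity>"
    by (intro Lim_transform_eventually[OF tendsto_const] eventually_sequentiallyI[of "Suc j"])
       (simp add: eq_commute)
  then have "L = -\<infinity>" using lim LIMSEQ_unique by blast
  then show False using \<open>L > -\<infinity>\<close> by simp
qed

text \<open>If the Cesaro averages of a real sequence converge, its terms grow sublinearly: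
  b_n = S_(n+1) - S_n, and S_(n+1)/(n+1) and S_n/(n+1) have the same limit.\<close>
lemma convergent_averages_sublinear_terms:
  fixes b :: "nat \<Rightarrow> real"
  assumes lim: "(\<lambda>n. (\<Sum>i<n. b i) / real n) \<longlonglongrightarrow> l"
  shows "(\<lambda>n. b n / real (Suc n)) \<longlonglongrightarrow> 0"
proof -
  define s where "s n = (\<Sum>i<n. b i)" for n
  have next_avg: "(\<lambda>n. s (Suc n) / real (Suc n)) \<longlonglongrightarrow> l"
    using LIMSEQ_Suc[OF lim] unfolding s_def .
  have shifted_avg: "(\<lambda>n. (s n / real n) * (real n / real (Suc n))) \<longlonglongrightarrow> l * 1"
    using lim unfolding s_def[symmetric] by (intro tendsto_mult LIMSEQ_n_over_Suc_n)
  have "b n / real (Suc n) = s (Suc n) / real (Suc n) - (s n / real n) * (real n / real (Suc n))"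
    for n
    by (cases "n = 0") (simp_all add: s_def diff_divide_distrib[symmetric])
  then have "(\<lambda>n. b n / real (Suc n)) \<longlonglongrightarrow> l - l * 1"
    by (simp only:) (intro tendsto_diff next_avg shifted_avg)
  then show ?thesis by simp
qed

lemma convergent_averages_real_sublinear:
  fixes a :: "nat \<Rightarrow> ereal"
  assumes ub: "\<And>i. a i \<le> ereal B"
    and lim: "(\<lambda>n. (\<Sum>i<n. a i) / ereal (real n)) \<longlonglongrightarrow> L" and "L > -\<infinity>"
  shows "\<exists>b. (\<forall>i. a i = ereal (b i)) \<and> (\<lambda>n. b n / real (Suc n)) \<longlonglongrightarrow> 0"
proof -
  define b where "b i = real_of_ereal (a i)" for i
  have ab: "a i = ereal (b i)" for i
    using ub[of i] convergent_averages_no_minf[OF ub lim \<open>L > -\<infinity>\<close>, of i]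
    unfolding b_def by (cases "a i") auto
  have avg: "(\<Sum>i<n. a i) / ereal (real n) = ereal ((\<Sum>i<n. b i) / real n)" for n
    unfolding ab by (cases "n = 0") auto
  have lim_real: "(\<lambda>n. ereal ((\<Sum>i<n. b i) / real n)) \<longlonglongrightarrow> L" using lim unfolding avg .
  have "(\<Sum>i<n. b i) / real n \<le> B" if "n \<noteq> 0" for n
  proof -
    have "(\<Sum>i<n. b i) \<le> (\<Sum>i<n. B)" by (rule sum_mono) (use ub ab in auto)
    then show ?thesis using that by (simp add: divide_le_eq mult.commute)
  qed
  then have "L \<le> ereal B"
    by (intro tendsto_upperbound[OF lim_real] eventually_sequentiallyI[of 1]) auto
  then obtain l where "L = ereal l" using \<open>L > -\<infinity>\<close> by (cases L) auto
  then have "(\<lambda>n. (\<Sum>i<n. b i) / real n) \<longlonglongrightarrow> l" using lim_real by simp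
  then show ?thesis using ab convergent_averages_sublinear_terms by blast
qed

lemma sublinear_lower_bound:
  fixes b :: "nat \<Rightarrow> real"
  assumes lim: "(\<lambda>n. b n / real (Suc n)) \<longlonglongrightarrow> 0" and "\<delta> > 0"
  shows "\<exists>K. \<forall>n. - b n \<le> K + \<delta> * real n"
proof -
  obtain N where N: "\<And>n. n \<ge> N \<Longrightarrow> \<bar>b n / real (Suc n)\<bar> < \<delta>"
    using tendstoD[OF lim \<open>\<delta> > 0\<close>] by (auto simp: eventually_sequentially)
  define K where "K = \<delta> + (\<Sum>n<N. \<bar>b n\<bar>)"
  have head_nonneg: "0 \<le> (\<Sum>n<N. \<bar>b n\<bar>)" by (simp add: sum_nonneg)
  have "- b n \<le> K + \<delta> * real n" for n
  proof (cases "n \<ge> N")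
    case True
    then have "\<bar>b n\<bar> < \<delta> * real (Suc n)" using N[of n] by (simp add: divide_less_eq)
    then have "\<bar>b n\<bar> < \<delta> + \<delta> * real n" by (simp add: algebra_simps)
    then show ?thesis unfolding K_def using head_nonneg abs_ge_minus_self[of "b n"] by linarith
  next
    case False
    then have "\<bar>b n\<bar> \<le> (\<Sum>n<N. \<bar>b n\<bar>)" by (intro member_le_sum) auto
    moreover have "0 \<le> \<delta> * real n" using \<open>\<delta> > 0\<close> by simp
    ultimately show ?thesis unfolding K_def using \<open>\<delta> > 0\<close> abs_ge_minus_self[of "b n"] by linarith
  qed
  then show ?thesis by blast
qed

lemma geometric_domination:
  fixes g :: "nat \<Rightarrow> real"
  assumes gb: "\<And>i. \<bar>g i\<bar> \<le> M * q ^ i" and "0 \<le> q" and "q < 1"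
  shows "summable g \<and> \<bar>suminf g\<bar> \<le> M / (1 - q)"
proof -
  have geom: "summable (\<lambda>i. M * q ^ i)"
    by (intro summable_mult summable_geometric) (use assms in auto)
  have abs_summable: "summable (\<lambda>i. \<bar>g i\<bar>)"
    by (rule summable_comparison_test'[OF geom, of 0]) (use gb in auto)
  have "\<bar>suminf g\<bar> \<le> (\<Sum>i. \<bar>g i\<bar>)" by (rule summable_rabs[OF abs_summable])
  also have "\<dots> \<le> (\<Sum>i. M * q ^ i)" by (rule suminf_le[OF gb abs_summable geom])
  also have "\<dots> = M / (1 - q)"
    using assms by (simp add: suminf_mult suminf_geometric summable_geometric)
  finally show ?thesis using summable_rabs_cancel[OF abs_summable] by blast
qed

lemma exp_eventually_dominates:
  fixes A t \<epsilon> :: real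
  assumes "t < \<epsilon>"
  shows "\<exists>n0. \<forall>n\<ge>n0. A * exp (t * real n) \<le> exp (\<epsilon> * real n)"
proof -
  define n0 where "n0 = nat \<lceil>ln A / (\<epsilon> - t)\<rceil>"
  have "A * exp (t * real n) \<le> exp (\<epsilon> * real n)" if "n \<ge> n0" for n
  proof (cases "A > 0")
    case True
    have "ln A \<le> (\<epsilon> - t) * real n"
      using \<open>n \<ge> n0\<close> assms unfolding n0_def by (simp add: divide_le_eq mult.commute)
    then have "A \<le> exp ((\<epsilon> - t) * real n)" using True by (metis exp_ln exp_le_cancel_iff)
    then have "A * exp (t * real n) \<le> exp ((\<epsilon> - t) * real n) * exp (t * real n)" by simp
    then show ?thesis by (simp add: exp_add[symmetric] algebra_simps)
  next
    case False
    then have "A * exp (t * real n) \<le> 0" by (simp add: mult_nonpos_nonneg)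
    then show ?thesis by (meson exp_ge_zero order_trans)
  qed
  then show ?thesis by blast
qed

text \<open>A C^1 norm bound bounds the sup norm, since the derivative part is nonnegative.\<close>
lemma C1_norm_le_abs:
  fixes u :: "'n::finite proj \<Rightarrow> real"
  assumes "C1_norm_le u K"
  shows "\<bar>u x\<bar> \<le> K"
proof -
  note C1 = assms[unfolded C1_norm_le_def]
  obtain z0 :: "complex^'n" where z0: "norm z0 = 1" using vector_choose_size[of 1] by auto
  then have "z0 \<noteq> 0" by auto
  then have "lift u differentiable (at z0)" using C1 by blast
  then have "0 \<le> onorm (frechet_derivative (lift u) (at z0))"
    unfolding frechet_derivative_works by (intro onorm_pos_le has_derivative_bounded_linear)
  also have "\<dots> \<le> (SUP z\<in>sphere 0 1. onorm (frechet_derivative (lift u) (at z)))"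
    using z0 C1 by (intro cSUP_upper) auto
  finally have "0 \<le> (SUP z\<in>sphere 0 1. onorm (frechet_derivative (lift u) (at z)))" .
  moreover have "\<bar>u x\<bar> \<le> (SUP x. \<bar>u x\<bar>)" by (rule cSUP_upper) (use C1 in auto)
  ultimately show ?thesis using C1 by linarith
qed

lemma orbit_in_ratmaps:
  fixes F :: "('n::finite \<times> ('n \<Rightarrow> nat)) proj \<Rightarrow> ('n \<times> ('n \<Rightarrow> nat)) proj"
  assumes F: "F \<in> measurable (ratmaps_borel d) (ratmaps_borel d)" and "f0 \<in> ratmaps d"
  shows "(F ^^ j) f0 \<in> ratmaps d"
proof -
  have space: "space (ratmaps_borel d) = ratmaps d"
    unfolding ratmaps_borel_def by (simp add: space_measure_of_conv)
  show ?thesis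
  proof (induction j)
    case (Suc j)
    then show ?case using measurable_space[OF F, of "(F ^^ j) f0"] unfolding space by simp
  qed (simp add: \<open>f0 \<in> ratmaps d\<close>)
qed

lemma birkhoff_orbit_distM_lower:
  fixes F :: "('n::finite \<times> ('n \<Rightarrow> nat)) proj \<Rightarrow> ('n \<times> ('n \<Rightarrow> nat)) proj"
  assumes "f0 \<in> birkhoff_set d F \<Lambda>" and "ext_integral \<Lambda> (log_dist d) > -\<infinity>" and "\<delta> > 0"
  shows "\<exists>K. \<forall>j. 0 < distM d ((F ^^ j) f0) \<and> exp (- K - \<delta> * real j) \<le> distM d ((F ^^ j) f0)"
proof -
  obtain B where B: "\<And>f :: ('n \<times> ('n \<Rightarrow> nat)) proj. log_dist d f \<le> ereal B"
    using log_dist_bounded_above by blast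
  have lim: "(\<lambda>n. (\<Sum>i<n. log_dist d ((F ^^ i) f0)) / ereal (real n))
      \<longlonglongrightarrow> ext_integral \<Lambda> (log_dist d)"
    using assms(1) unfolding birkhoff_set_def by simp
  obtain b where ab: "\<And>i. log_dist d ((F ^^ i) f0) = ereal (b i)"
    and "(\<lambda>n. b n / real (Suc n)) \<longlonglongrightarrow> 0"
    using convergent_averages_real_sublinear[of "\<lambda>i. log_dist d ((F ^^ i) f0)", OF B lim assms(2)]
    by blast
  then obtain K where K: "\<And>j. - b j \<le> K + \<delta> * real j"
    using sublinear_lower_bound \<open>\<delta> > 0\<close> by blast
  have pos: "distM d ((F ^^ j) f0) > 0" and log: "b j = ln (distM d ((F ^^ j) f0))" for j
    using ab[of j] unfolding log_dist_def by (auto split: if_splits)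
  have "exp (- K - \<delta> * real j) \<le> exp (b j)" for j using K[of j] by simp
  then show ?thesis using pos log by auto
qed

lemma orbit_potentials_subexponential:
  assumes F: "F \<in> measurable (ratmaps_borel d) (ratmaps_borel d)"
    and f0: "f0 \<in> birkhoff_set d F \<Lambda>" and int: "ext_integral \<Lambda> (log_dist d) > -\<infinity>"
    and "0 \<le> C" and "p > 0"
    and C1: "\<forall>f\<in>holo d. C1_norm_le (u f) (C * distM d f powr (-p))"
    and "t > 0"
  shows "\<exists>D. \<forall>j y. \<bar>u ((F ^^ j) f0) y\<bar> \<le> D * exp (t * real j)"
proof -
  obtain K where K: "\<And>j. 0 < distM d ((F ^^ j) f0)"
      "\<And>j. exp (- K - t / p * real j) \<le> distM d ((F ^^ j) f0)"
    using birkhoff_orbit_distM_lower[OF f0 int, of "t / p"] \<open>t > 0\<close> \<open>p > 0\<close> by auto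
  have "\<bar>u ((F ^^ j) f0) y\<bar> \<le> C * exp (p * K) * exp (t * real j)" for j y
  proof -
    have "f0 \<in> ratmaps d" using f0 unfolding birkhoff_set_def by simp
    then have "(F ^^ j) f0 \<in> holo d"
      using holo_if_distM_pos orbit_in_ratmaps[OF F] K(1) by blast
    then have "\<bar>u ((F ^^ j) f0) y\<bar> \<le> C * distM d ((F ^^ j) f0) powr (-p)"
      using C1 C1_norm_le_abs by blast
    also have "\<dots> \<le> C * exp (- K - t / p * real j) powr (-p)"
      using K \<open>p > 0\<close> \<open>0 \<le> C\<close> by (intro mult_left_mono powr_mono2') auto
    also have "\<dots> = C * exp (p * K) * exp (t * real j)"
      using \<open>p > 0\<close> by (simp add: powr_def exp_add[symmetric] algebra_simps)
    finally show ?thesis .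
  qed
  then show ?thesis by blast
qed

text \<open>If |u_j| \<le> D e^(t j) and e^t < d, the i-th term of g_n is at most
  D e^(t n) (e^t / d)^i, so g_n converges and |g_n| \<le> A e^(t n).\<close>
lemma gfun_exponential_bound:
  assumes ub: "\<And>j y. \<bar>u ((F ^^ j) f0) y\<bar> \<le> D * exp (t * real j)"
    and ratio: "exp t < real d"
  shows "summable (gterm d F u f0 n x)
    \<and> \<bar>gfun d F u f0 n x\<bar> \<le> D / (1 - exp t / real d) * exp (t * real n)"
proof -
  have "real d > 0" using ratio exp_gt_zero[of t] by linarith
  have "\<bar>gterm d F u f0 n x i\<bar> \<le> (D * exp (t * real n)) * (exp t / real d) ^ i" for i
  proof -
    have "\<bar>gterm d F u f0 n x i\<bar> = \<bar>u ((F ^^ (n + i)) f0) (orbit d F f0 n i x)\<bar> / real d ^ i"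
      unfolding gterm_def by simp
    also have "\<dots> \<le> D * exp (t * real (n + i)) / real d ^ i"
      by (intro divide_right_mono ub) simp
    also have "\<dots> = (D * exp (t * real n)) * (exp t / real d) ^ i"
      by (simp add: algebra_simps exp_add power_divide exp_of_nat_mult[symmetric])
    finally show ?thesis .
  qed
  moreover have "exp t / real d < 1" using ratio \<open>real d > 0\<close> by simp
  ultimately have "summable (gterm d F u f0 n x)
      \<and> \<bar>gfun d F u f0 n x\<bar> \<le> D * exp (t * real n) / (1 - exp t / real d)"
    unfolding gfun_def by (intro geometric_domination) simp_all
  then show ?thesis by simp
qed

lemma orbit_gfun_exponential_bound:
  assumes F: "F \<in> measurable (ratmaps_borel d) (ratmaps_borel d)"
    and f0: "f0 \<in> birkhoff_set d F \<Lambda>" and int: "ext_integral \<Lambda> (log_dist d) > -\<infinity>"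
    and "0 \<le> C" and "p > 0"
    and C1: "\<forall>f\<in>holo d. C1_norm_le (u f) (C * distM d f powr (-p))"
    and "t > 0" and "exp t < real d"
  shows "\<exists>A. \<forall>n x. summable (gterm d F u f0 n x) \<and> \<bar>gfun d F u f0 n x\<bar> \<le> A * exp (t * real n)"
proof -
  obtain D where "\<And>j y. \<bar>u ((F ^^ j) f0) y\<bar> \<le> D * exp (t * real j)"
    using orbit_potentials_subexponential[OF assms(1-7)] by blast
  then show ?thesis using gfun_exponential_bound \<open>exp t < real d\<close> by blast
qed

theorem mainTheorem15:
  fixes d :: nat
    and F :: "('n::finite \<times> ('n \<Rightarrow> nat)) proj \<Rightarrow> ('n \<times> ('n \<Rightarrow> nat)) proj"
    and \<Lambda> :: "('n \<times> ('n \<Rightarrow> nat)) proj measure"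
    and u :: "('n \<times> ('n \<Rightarrow> nat)) proj \<Rightarrow> 'n proj \<Rightarrow> real"
    and f0 :: "('n \<times> ('n \<Rightarrow> nat)) proj"
  assumes "CARD('n) \<ge> 2" and "d \<ge> 2"
    and "prob_space \<Lambda>" and "sets \<Lambda> = sets (ratmaps_borel d)"
    and "F \<in> measurable (ratmaps_borel d) (ratmaps_borel d)"
    and "\<forall>S\<in>sets \<Lambda>. emeasure \<Lambda> (F -` S \<inter> space \<Lambda>) = emeasure \<Lambda> S"
    and "\<forall>S\<in>sets \<Lambda>. F -` S \<inter> space \<Lambda> = S \<longrightarrow> measure \<Lambda> S = 0 \<or> measure \<Lambda> S = 1"
    and "ext_integral \<Lambda> (log_dist d) > -\<infinity>"
    and "f0 \<in> birkhoff_set d F \<Lambda>"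
    and "\<exists>C>0. \<exists>p>0. \<forall>f\<in>holo d. ddc_eq d f (u f) \<and> (\<forall>x. u f x \<le> 0)
                              \<and> C1_norm_le (u f) (C * distM d f powr (-p))"
  shows "(\<forall>n x. summable (gterm d F u f0 n x)) \<and>
         (\<forall>\<epsilon>>0. \<exists>n0. \<forall>n\<ge>n0. \<forall>x. \<bar>gfun d F u f0 n x\<bar> \<le> exp (\<epsilon> * real n))"
proof -
  obtain C p where "C > 0" "p > 0"
    and C1: "\<forall>f\<in>holo d. C1_norm_le (u f) (C * distM d f powr (-p))"
    using assms(10) by blast
  text \<open>Every rate 0 < t \<le> ln(3/2) satisfies e^t < 2 \<le> d, hence g_n = O(e^(t n)).\<close>
  have gfun_bound: "\<exists>A. \<forall>n x. summable (gterm d F u f0 n x)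
      \<and> \<bar>gfun d F u f0 n x\<bar> \<le> A * exp (t * real n)" if "0 < t" "t \<le> ln (3/2)" for t
  proof (rule orbit_gfun_exponential_bound[OF assms(5,9,8) _ \<open>p > 0\<close> C1 \<open>0 < t\<close>])
    have "exp t \<le> 3/2" using \<open>t \<le> ln (3/2)\<close>
      by (metis exp_ln exp_le_cancel_iff zero_less_divide_iff zero_less_numeral)
    then show "exp t < real d" using assms(2) by linarith
  qed (use \<open>C > 0\<close> in simp)
  have "\<exists>n0. \<forall>n\<ge>n0. \<forall>x. \<bar>gfun d F u f0 n x\<bar> \<le> exp (\<epsilon> * real n)" if "\<epsilon> > 0" for \<epsilon>
  proof -
    define t where "t = min (ln (3/2)) (\<epsilon> / 2)"
    have "0 < t" "t < \<epsilon>" unfolding t_def using \<open>\<epsilon> > 0\<close> by auto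
    obtain A where "\<And>n x. \<bar>gfun d F u f0 n x\<bar> \<le> A * exp (t * real n)"
      using gfun_bound[OF \<open>0 < t\<close>] unfolding t_def by auto
    then show ?thesis using exp_eventually_dominates[OF \<open>t < \<epsilon>\<close>, of A] by (meson order_trans)
  qed
  moreover have "\<forall>n x. summable (gterm d F u f0 n x)" using gfun_bound[of "ln (3/2)"] by auto
  ultimately show ?thesis by blast
qed

end
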